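(* Let $\overrightarrow{W}$ be a Morse sequence on a simplicial complex $K$. (1) If $z\in Z_p(K)$, then $\widetilde{\curlywedge}_p(\curlywedge_p(z))$ is homologous to $z$, i.e. $\widetilde{\curlywedge}_p(\curlywedge_p(z))+z\in B_p(K)$. (2) If $z\in Z^p(K)$, then $\widetilde{\curlyvee}_p(\curlyvee_p(z))$ is cohomologous to $z$, i.e. $\widetilde{\curlyvee}_p(\curlyvee_p(z))+z\in B^p(K)$.
   Context: A simplicial complex $K$ is a finite collection of non-empty finite sets closed under taking non-empty subsets; $\dim\sigma=|\sigma|-1$, $K^{(p)}$ the set of $p$-simplices. A pair $(\sigma,\tau)$ with $\sigma\subsetneq\tau$ is a free pair for $K$ if $\tau$ is the only simplex other than $\sigma$ containing $\sigma$; $K$ is then an elementary expansion of $K\setminus\{\sigma,\tau\}$. If $\nu$ is a facet (maximal simplex) of $K$, $K$ is an elementary filling of $K\setminus\{\nu\}$. A Morse sequence on $K$ is a sequence $\langle\emptyset=K_0,\dots,K_k=K\rangle$ with each $K_i$ an elementary expansion or filling of $K_{i-1}$; simplices added by fillings are critical; for an expansion $K_i=K_{i-1}\cup\{\sigma,\tau\}$, $\sigma\subset\tau$, $\sigma$ is lower regular and $\tau$ upper regular. $\widehat W$ is the set of critical simplices. $K[p]$ is the $\mathbb{Z}_2$-vector space of subsets of $K^{(p)}$ (sum = symmetric difference, $0=\emptyset$), $\widehat W[p]=\{c\in K[p]:c\subseteq\widehat W\}$. For $\sigma\in K^{(p)}$, $\partial(\sigma)=\{\tau\in K^{(p-1)}:\tau\subset\sigma\}$,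 $\delta(\sigma)=\{\tau\in K^{(p+1)}:\sigma\subset\tau\}$, extended linearly to $\partial_p,\delta_p$; $Z_p(K)=\ker\partial_p$, $B_p(K)=\operatorname{im}\partial_{p+1}$, $Z^p(K)=\ker\delta_p$, $B^p(K)=\operatorname{im}\delta_{p-1}$. The reference map $\curlywedge$ is the unique map assigning to each $p$-simplex an element of $\widehat W[p]$, with linear extension $\curlywedge_p:K[p]\to\widehat W[p]$, such that $\curlywedge(\nu)=\{\nu\}$ for critical $\nu$ and $\curlywedge(\tau)=0=\curlywedge(\partial(\tau))$ for upper regular $\tau$; the coreference map $\curlyvee$ (linear extension $\curlyvee_p$) is the unique such map with $\curlyvee(\nu)=\{\nu\}$ for critical $\nu$ and $\curlyvee(\sigma)=0=\curlyvee(\delta(\sigma))$ for lower regular $\sigma$. The extension map $\widetilde\curlywedge_p:\widehat W[p]\to K[p]$ and coextension map $\widetilde\curlyvee_p:\widehat W[p]\to K[p]$ are the linear maps defined on critical $p$-simplices $\kappa$ by $\widetilde\curlywedge(\kappa)=\{\nu\in K:\kappa\in\curlyvee(\nu)\}$ and $\widetilde\curlyvee(\kappa)=\{\nu\in K:\kappa\in\curlywedge(\nu)\}$. *)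

theory Defs
  imports Main
begin

definition simplicial_complex :: "'v set set \<Rightarrow> bool" where
  "simplicial_complex K \<longleftrightarrow> finite K \<and> (\<forall>\<sigma>\<in>K. finite \<sigma> \<and> \<sigma> \<noteq> {}) \<and>
     (\<forall>\<sigma>\<in>K. \<forall>\<tau>. \<tau> \<subseteq> \<sigma> \<and> \<tau> \<noteq> {} \<longrightarrow> \<tau> \<in> K)"

definition simplices :: "'v set set \<Rightarrow> nat \<Rightarrow> 'v set set" where
  "simplices K p = {\<sigma>\<in>K. card \<sigma> = p + 1}"

text \<open>Sum in the Z2-vector space of chains (symmetric difference).\<close>
definition chain_add :: "'a set \<Rightarrow> 'a set \<Rightarrow> 'a set" where
  "chain_add a b = (a - b) \<union> (b - a)"

text \<open>Z2-linear extension of a map f on simplices to a (finite) chain c: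
  the sum of the f \<sigma> for \<sigma> in c, i.e. the elements occurring an odd number of times.\<close>
definition lin :: "('a \<Rightarrow> 'b set) \<Rightarrow> 'a set \<Rightarrow> 'b set" where
  "lin f c = {x. odd (card {\<sigma>\<in>c. x \<in> f \<sigma>})}"

definition bd :: "'v set set \<Rightarrow> 'v set \<Rightarrow> 'v set set" where
  "bd K \<sigma> = {\<tau>\<in>K. \<tau> \<subseteq> \<sigma> \<and> card \<tau> + 1 = card \<sigma>}"

definition cobd :: "'v set set \<Rightarrow> 'v set \<Rightarrow> 'v set set" where
  "cobd K \<sigma> = {\<tau>\<in>K. \<sigma> \<subseteq> \<tau> \<and> card \<tau> = card \<sigma> + 1}"

definition cycles :: "'v set set \<Rightarrow> nat \<Rightarrow> 'v set set set" where
  "cycles K p = {z. z \<subseteq> simplices K p \<and> lin (bd K) z = {}}"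

definition boundaries :: "'v set set \<Rightarrow> nat \<Rightarrow> 'v set set set" where
  "boundaries K p = {lin (bd K) c | c. c \<subseteq> simplices K (p + 1)}"

definition cocycles :: "'v set set \<Rightarrow> nat \<Rightarrow> 'v set set set" where
  "cocycles K p = {z. z \<subseteq> simplices K p \<and> lin (cobd K) z = {}}"

text \<open>B^p = image of the coboundary on (p-1)-chains; the (p-1)-simplices are the
  simplices with p vertices (for p = 0 there are none, so B^0 = {0}).\<close>
definition coboundaries :: "'v set set \<Rightarrow> nat \<Rightarrow> 'v set set set" where
  "coboundaries K p = {lin (cobd K) c | c. c \<subseteq> {\<sigma>\<in>K. card \<sigma> = p}}"

definition free_pair :: "'v set set \<Rightarrow> 'v set \<Rightarrow> 'v set \<Rightarrow> bool" where
  "free_pair K \<sigma> \<tau> \<longleftrightarrow> \<sigma> \<in> K \<and> \<tau> \<in> K \<and> \<sigma> \<subset> \<tau> \<and>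
     (\<forall>\<nu>\<in>K. \<sigma> \<subseteq> \<nu> \<longrightarrow> \<nu> = \<sigma> \<or> \<nu> = \<tau>)"

definition elem_expansion :: "'v set set \<Rightarrow> 'v set set \<Rightarrow> bool" where
  "elem_expansion K' K \<longleftrightarrow> (\<exists>\<sigma> \<tau>. free_pair K' \<sigma> \<tau> \<and> K = K' - {\<sigma>, \<tau>})"

definition facet :: "'v set set \<Rightarrow> 'v set \<Rightarrow> bool" where
  "facet K \<nu> \<longleftrightarrow> \<nu> \<in> K \<and> (\<forall>\<mu>\<in>K. \<nu> \<subseteq> \<mu> \<longrightarrow> \<mu> = \<nu>)"

definition elem_filling :: "'v set set \<Rightarrow> 'v set set \<Rightarrow> bool" where
  "elem_filling K' K \<longleftrightarrow> (\<exists>\<nu>. facet K' \<nu> \<and> K = K' - {\<nu>})"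

definition morse_seq :: "'v set set list \<Rightarrow> 'v set set \<Rightarrow> bool" where
  "morse_seq W K \<longleftrightarrow> W \<noteq> [] \<and> W ! 0 = {} \<and> last W = K \<and>
     (\<forall>i. Suc i < length W \<longrightarrow> elem_expansion (W ! Suc i) (W ! i) \<or> elem_filling (W ! Suc i) (W ! i))"

definition critical :: "'v set set list \<Rightarrow> 'v set set" where
  "critical W = {\<nu>. \<exists>i. Suc i < length W \<and> elem_filling (W ! Suc i) (W ! i) \<and> W ! Suc i - W ! i = {\<nu>}}"

definition lower_regular :: "'v set set list \<Rightarrow> 'v set set" where
  "lower_regular W = {\<sigma>. \<exists>i \<tau>. Suc i < length W \<and> \<sigma> \<subset> \<tau> \<and> W ! Suc i - W ! i = {\<sigma>, \<tau>}}"

definition upper_regular :: "'v set set list \<Rightarrow> 'v set set" where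
  "upper_regular W = {\<tau>. \<exists>i \<sigma>. Suc i < length W \<and> \<sigma> \<subset> \<tau> \<and> W ! Suc i - W ! i = {\<sigma>, \<tau>}}"

text \<open>Maps are on the simplices of K (value {} outside K, for uniqueness);
  a p-simplex is mapped to an element of \<^emph>\<open>W-hat\<close>[p].\<close>
definition is_ref_map :: "'v set set list \<Rightarrow> 'v set set \<Rightarrow> ('v set \<Rightarrow> 'v set set) \<Rightarrow> bool" where
  "is_ref_map W K f \<longleftrightarrow>
     (\<forall>\<sigma>. \<sigma> \<notin> K \<longrightarrow> f \<sigma> = {}) \<and>
     (\<forall>\<sigma>\<in>K. f \<sigma> \<subseteq> critical W \<inter> {\<nu>\<in>K. card \<nu> = card \<sigma>}) \<and>
     (\<forall>\<nu>\<in>critical W. f \<nu> = {\<nu>}) \<and>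
     (\<forall>\<tau>\<in>upper_regular W. f \<tau> = {} \<and> lin f (bd K \<tau>) = {})"

definition ref_map :: "'v set set list \<Rightarrow> 'v set set \<Rightarrow> 'v set \<Rightarrow> 'v set set" where
  "ref_map W K = (THE f. is_ref_map W K f)"

definition is_coref_map :: "'v set set list \<Rightarrow> 'v set set \<Rightarrow> ('v set \<Rightarrow> 'v set set) \<Rightarrow> bool" where
  "is_coref_map W K f \<longleftrightarrow>
     (\<forall>\<sigma>. \<sigma> \<notin> K \<longrightarrow> f \<sigma> = {}) \<and>
     (\<forall>\<sigma>\<in>K. f \<sigma> \<subseteq> critical W \<inter> {\<nu>\<in>K. card \<nu> = card \<sigma>}) \<and>
     (\<forall>\<nu>\<in>critical W. f \<nu> = {\<nu>}) \<and>
     (\<forall>\<sigma>\<in>lower_regular W. f \<sigma> = {} \<and> lin f (cobd K \<sigma>) = {})"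

definition coref_map :: "'v set set list \<Rightarrow> 'v set set \<Rightarrow> 'v set \<Rightarrow> 'v set set" where
  "coref_map W K = (THE f. is_coref_map W K f)"

definition ext_map :: "'v set set list \<Rightarrow> 'v set set \<Rightarrow> 'v set \<Rightarrow> 'v set set" where
  "ext_map W K \<kappa> = {\<nu>\<in>K. \<kappa> \<in> coref_map W K \<nu>}"

definition coext_map :: "'v set set list \<Rightarrow> 'v set set \<Rightarrow> 'v set \<Rightarrow> 'v set set" where
  "coext_map W K \<kappa> = {\<nu>\<in>K. \<kappa> \<in> ref_map W K \<nu>}"

end

(*
  A Morse sequence matches each lower regular simplex with an upper regular one added in the
  same step, and this matching is acyclic with respect to the order of the steps. Adding boundaries
  of upper regular simplices, always cancelling the latest lower regular simplex, turns every chain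
  into a homologous one without lower regular simplices, and acyclicity makes this representative
  unique. The reference map sends a chain to the critical part of that representative.

  For a cycle z with representative z' = z + \<partial>d, the extension of the critical part of z' is z'
  itself: by duality, the coreference of a simplex is its critical part plus a coboundary, and
  coboundaries pair trivially with cycles. Hence the extension of the reference of z is z + \<partial>d.
  The statement for cocycles is the same argument applied to the dual matching, with the
  incidence relation reversed and dimension and step index negated.
*)
theory Submission
  imports Defs "HOL-Library.Z2"
begin

section \<open>Chains over \<open>\<int>\<^sub>2\<close>\<close>

abbreviation ind :: "bool \<Rightarrow> bit" where "ind b \<equiv> of_bool b"

lemma of_nat_bit_eq: "(of_nat n :: bit) = ind (odd n)"
  by (induction n) auto

lemma ind_odd_card_filter:
  assumes "finite A"
  shows "ind (odd (card {x\<in>A. P x})) = (\<Sum>x\<in>A. ind (P x))"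
proof -
  have "(\<Sum>x\<in>A. ind (P x)) = of_nat (card (A \<inter> {x. P x}))"
    using assms by (simp add: sum_of_bool_eq)
  also have "A \<inter> {x. P x} = {x\<in>A. P x}" by blast
  finally show ?thesis by (simp add: of_nat_bit_eq)
qed

lemma set_eq_indI: "(\<And>a. ind (a \<in> x) = ind (a \<in> y)) \<Longrightarrow> x = y"
  by (rule set_eqI) (metis of_bool_eq_iff)

lemma ind_mem_chain_add: "ind (a \<in> chain_add x y) = ind (a \<in> x) + ind (a \<in> y)"
  by (auto simp: chain_add_def)

lemma chain_add_commute: "chain_add x y = chain_add y x"
  by (auto simp: chain_add_def)

lemma chain_add_assoc: "chain_add (chain_add x y) z = chain_add x (chain_add y z)"
  by (auto simp: chain_add_def)

lemma chain_add_self [simp]: "chain_add x x = {}"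
  by (auto simp: chain_add_def)

lemma chain_add_empty [simp]: "chain_add x {} = x" "chain_add {} x = x"
  by (auto simp: chain_add_def)

lemma chain_add_cancel [simp]:
  "chain_add x (chain_add x y) = y" "chain_add (chain_add x y) y = x"
  by (auto simp: chain_add_def)

lemma chain_add_cancel_left: "chain_add (chain_add x y) (chain_add x z) = chain_add y z"
  unfolding chain_add_def by blast

lemma chain_add_eq_empty_iff: "chain_add x y = {} \<longleftrightarrow> x = y"
  by (auto simp: chain_add_def)

lemma chain_add_subset: "chain_add x y \<subseteq> x \<union> y"
  by (auto simp: chain_add_def)

lemma ind_mem_lin: "finite c \<Longrightarrow> ind (a \<in> lin f c) = (\<Sum>\<sigma>\<in>c. ind (a \<in> f \<sigma>))"
  unfolding lin_def mem_Collect_eq by (rule ind_odd_card_filter)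

lemma ind_mem_lin_superset:
  assumes "finite U" "c \<subseteq> U"
  shows "ind (a \<in> lin f c) = (\<Sum>\<sigma>\<in>U. ind (\<sigma> \<in> c) * ind (a \<in> f \<sigma>))"
proof -
  have "(\<Sum>\<sigma>\<in>U. ind (\<sigma> \<in> c) * ind (a \<in> f \<sigma>)) = (\<Sum>\<sigma>\<in>U. if \<sigma> \<in> c then ind (a \<in> f \<sigma>) else 0)"
    by (rule sum.cong) auto
  also have "\<dots> = (\<Sum>\<sigma>\<in>U \<inter> c. ind (a \<in> f \<sigma>))"
    by (rule sum.inter_restrict[OF assms(1), symmetric])
  also have "U \<inter> c = c" using assms(2) by blast
  finally have "(\<Sum>\<sigma>\<in>U. ind (\<sigma> \<in> c) * ind (a \<in> f \<sigma>)) = (\<Sum>\<sigma>\<in>c. ind (a \<in> f \<sigma>))" .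
  then show ?thesis
    by (simp only: ind_mem_lin[OF finite_subset[OF assms(2,1)]])
qed

lemma lin_subset_UN: "lin f c \<subseteq> \<Union>(f ` c)"
proof
  fix a assume "a \<in> lin f c"
  then have "card {\<sigma>\<in>c. a \<in> f \<sigma>} \<noteq> 0" by (auto simp: lin_def odd_pos)
  then have "{\<sigma>\<in>c. a \<in> f \<sigma>} \<noteq> {}" by force
  then show "a \<in> \<Union>(f ` c)" by blast
qed

lemma lin_empty [simp]: "lin f {} = {}"
  by (simp add: lin_def)

lemma lin_singleton [simp]: "lin f {\<sigma>} = f \<sigma>"
  by (rule set_eq_indI) (simp add: ind_mem_lin)

lemma lin_eq_emptyI: "(\<And>\<sigma>. \<sigma> \<in> c \<Longrightarrow> f \<sigma> = {}) \<Longrightarrow> lin f c = {}"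
  using lin_subset_UN[of f c] by blast

lemma lin_cong: "(\<And>\<sigma>. \<sigma> \<in> c \<Longrightarrow> f \<sigma> = g \<sigma>) \<Longrightarrow> lin f c = lin g c"
proof -
  assume "\<And>\<sigma>. \<sigma> \<in> c \<Longrightarrow> f \<sigma> = g \<sigma>"
  then have "{\<sigma>\<in>c. a \<in> f \<sigma>} = {\<sigma>\<in>c. a \<in> g \<sigma>}" for a by auto
  then show ?thesis by (simp add: lin_def)
qed

lemma lin_chain_add:
  assumes "finite c" "finite c'"
  shows "lin f (chain_add c c') = chain_add (lin f c) (lin f c')"
proof (rule set_eq_indI)
  fix a
  have U: "finite (c \<union> c')" using assms by simp
  have "ind (a \<in> lin f (chain_add c c')) = (\<Sum>\<sigma>\<in>c \<union> c'. ind (\<sigma> \<in> chain_add c c') * ind (a \<in> f \<sigma>))"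
    by (rule ind_mem_lin_superset[OF U chain_add_subset])
  also have "\<dots> = (\<Sum>\<sigma>\<in>c \<union> c'. ind (\<sigma> \<in> c) * ind (a \<in> f \<sigma>))
        + (\<Sum>\<sigma>\<in>c \<union> c'. ind (\<sigma> \<in> c') * ind (a \<in> f \<sigma>))"
    by (simp only: ind_mem_chain_add distrib_right sum.distrib)
  also have "\<dots> = ind (a \<in> chain_add (lin f c) (lin f c'))"
    by (simp only: ind_mem_lin_superset[OF U Un_upper1]
        ind_mem_lin_superset[OF U Un_upper2] ind_mem_chain_add)
  finally show "ind (a \<in> lin f (chain_add c c')) = ind (a \<in> chain_add (lin f c) (lin f c'))" .
qed

lemma lin_chain_add_fun:
  "finite c \<Longrightarrow> lin (\<lambda>\<sigma>. chain_add (f \<sigma>) (g \<sigma>)) c = chain_add (lin f c) (lin g c)"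
  by (rule set_eq_indI) (simp only: ind_mem_lin ind_mem_chain_add sum.distrib)

lemma lin_Int: "lin (\<lambda>\<sigma>. S \<inter> f \<sigma>) c = S \<inter> lin f c"
proof -
  have "{\<sigma>\<in>c. a \<in> S \<inter> f \<sigma>} = (if a \<in> S then {\<sigma>\<in>c. a \<in> f \<sigma>} else {})" for a by auto
  then show ?thesis by (auto simp: lin_def)
qed

lemma lin_singleton_fun: "lin (\<lambda>\<sigma>. {\<sigma>}) c = c"
proof -
  have "{\<sigma>\<in>c. a \<in> {\<sigma>}} = (if a \<in> c then {a} else {})" for a by auto
  then show ?thesis by (auto simp: lin_def)
qed

lemma lin_lin:
  assumes "finite U" "c \<subseteq> U" "\<And>\<tau>. \<tau> \<in> c \<Longrightarrow> g \<tau> \<subseteq> U"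
  shows "lin f (lin g c) = lin (\<lambda>\<tau>. lin f (g \<tau>)) c"
proof (rule set_eq_indI)
  fix a
  have gc: "lin g c \<subseteq> U" using lin_subset_UN[of g c] assms(3) by blast
  have "ind (a \<in> lin f (lin g c)) = (\<Sum>\<rho>\<in>U. ind (\<rho> \<in> lin g c) * ind (a \<in> f \<rho>))"
    by (rule ind_mem_lin_superset[OF assms(1) gc])
  also have "\<dots> = (\<Sum>\<rho>\<in>U. \<Sum>\<tau>\<in>U. ind (\<tau> \<in> c) * (ind (\<rho> \<in> g \<tau>) * ind (a \<in> f \<rho>)))"
    by (simp only: ind_mem_lin_superset[OF assms(1,2)] sum_distrib_right mult.assoc)
  also have "\<dots> = (\<Sum>\<tau>\<in>U. \<Sum>\<rho>\<in>U. ind (\<tau> \<in> c) * (ind (\<rho> \<in> g \<tau>) * ind (a \<in> f \<rho>)))"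
    by (rule sum.swap)
  also have "\<dots> = (\<Sum>\<tau>\<in>U. ind (\<tau> \<in> c) * ind (a \<in> lin f (g \<tau>)))"
  proof (rule sum.cong)
    fix \<tau>
    show "(\<Sum>\<rho>\<in>U. ind (\<tau> \<in> c) * (ind (\<rho> \<in> g \<tau>) * ind (a \<in> f \<rho>)))
        = ind (\<tau> \<in> c) * ind (a \<in> lin f (g \<tau>))"
      by (cases "\<tau> \<in> c") (simp_all add: ind_mem_lin_superset[OF assms(1) assms(3)] sum_distrib_left)
  qed simp
  also have "\<dots> = ind (a \<in> lin (\<lambda>\<tau>. lin f (g \<tau>)) c)"
    by (rule ind_mem_lin_superset[OF assms(1,2), symmetric])
  finally show "ind (a \<in> lin f (lin g c)) = ind (a \<in> lin (\<lambda>\<tau>. lin f (g \<tau>)) c)" .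
qed

lemma ind_odd_card_Int: "finite x \<Longrightarrow> ind (odd (card (x \<inter> A))) = (\<Sum>y\<in>x. ind (y \<in> A))"
  using ind_odd_card_filter[of x "\<lambda>y. y \<in> A"] by (simp add: Collect_conj_eq Int_commute)

lemma odd_card_Int_chain_add:
  assumes "finite x"
  shows "odd (card (x \<inter> chain_add a b)) \<longleftrightarrow> odd (card (x \<inter> a)) \<noteq> odd (card (x \<inter> b))"
proof -
  have "ind (odd (card (x \<inter> chain_add a b))) = ind (odd (card (x \<inter> a))) + ind (odd (card (x \<inter> b)))"
    by (simp only: ind_odd_card_Int[OF assms] ind_mem_chain_add sum.distrib)
  then show ?thesis by (cases "odd (card (x \<inter> a))"; cases "odd (card (x \<inter> b))") simp_all
qed

lemma odd_card_Int_lin_transpose: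
  assumes "finite x" "finite y"
  shows "odd (card (x \<inter> lin (\<lambda>\<mu>. {\<kappa>. R \<mu> \<kappa>}) y)) \<longleftrightarrow> odd (card (y \<inter> lin (\<lambda>\<kappa>. {\<mu>. R \<mu> \<kappa>}) x))"
proof -
  have "ind (odd (card (x \<inter> lin (\<lambda>\<mu>. {\<kappa>. R \<mu> \<kappa>}) y))) = (\<Sum>\<kappa>\<in>x. \<Sum>\<mu>\<in>y. ind (R \<mu> \<kappa>))"
    by (simp only: ind_odd_card_Int[OF assms(1)] ind_mem_lin[OF assms(2)] mem_Collect_eq)
  also have "\<dots> = (\<Sum>\<mu>\<in>y. \<Sum>\<kappa>\<in>x. ind (R \<mu> \<kappa>))"
    by (rule sum.swap)
  also have "\<dots> = ind (odd (card (y \<inter> lin (\<lambda>\<kappa>. {\<mu>. R \<mu> \<kappa>}) x)))"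
    by (simp only: ind_odd_card_Int[OF assms(2)] ind_mem_lin[OF assms(1)] mem_Collect_eq)
  finally show ?thesis by (simp only: of_bool_eq_iff)
qed

section \<open>Reference maps of acyclic matchings\<close>

lemma ex_max_image:
  fixes f :: "'a \<Rightarrow> 'b::linorder"
  assumes "finite A" "A \<noteq> {}"
  shows "\<exists>a\<in>A. \<forall>a'\<in>A. f a' \<le> f a"
proof -
  have "Max (f ` A) \<in> f ` A" using assms by simp
  then obtain a where a: "a \<in> A" "f a = Max (f ` A)" by (metis imageE)
  have "f a' \<le> f a" if "a' \<in> A" for a'
    unfolding a(2) by (rule Max_ge) (use assms(1) that in auto)
  with a(1) show ?thesis by blast
qed

text \<open>The argument is carried out for an abstract acyclic matching: \<open>F \<rho> \<nu>\<close> says that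
  \<open>\<rho>\<close> is a codimension-one face of \<open>\<nu>\<close>, \<open>P\<close> matches each lower regular cell with an upper
  regular one, and \<open>t\<close> is a filtration index (the step of the Morse sequence adding a cell).
  Dimension and index are integers so that reversing \<open>F\<close> and negating \<open>dim\<close> and \<open>t\<close> yields
  the dual matching, in which the coreference map is the reference map.\<close>

definition is_reference ::
    "'a set \<Rightarrow> ('a \<Rightarrow> 'a \<Rightarrow> bool) \<Rightarrow> ('a \<Rightarrow> int) \<Rightarrow> 'a set \<Rightarrow> 'a set \<Rightarrow> ('a \<Rightarrow> 'a set) \<Rightarrow> bool" where
  "is_reference C F dim crit up f \<longleftrightarrow>
     (\<forall>x. x \<notin> C \<longrightarrow> f x = {}) \<and>
     (\<forall>x\<in>C. f x \<subseteq> {c\<in>crit. dim c = dim x}) \<and>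
     (\<forall>c\<in>crit. f c = {c}) \<and>
     (\<forall>\<tau>\<in>up. f \<tau> = {} \<and> lin f {\<rho>. F \<rho> \<tau>} = {})"

definition reference ::
    "'a set \<Rightarrow> ('a \<Rightarrow> 'a \<Rightarrow> bool) \<Rightarrow> ('a \<Rightarrow> int) \<Rightarrow> 'a set \<Rightarrow> 'a set \<Rightarrow> 'a \<Rightarrow> 'a set" where
  "reference C F dim crit up = (THE f. is_reference C F dim crit up f)"

locale morse_matching =
  fixes C :: "'a set" and F :: "'a \<Rightarrow> 'a \<Rightarrow> bool" and dim :: "'a \<Rightarrow> int"
    and crit low up :: "'a set" and P :: "'a \<Rightarrow> 'a \<Rightarrow> bool" and t :: "'a \<Rightarrow> int"
  assumes finite_cells: "finite C"
    and face_cells: "F \<rho> \<nu> \<Longrightarrow> \<rho> \<in> C \<and> \<nu> \<in> C"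
    and face_dim: "F \<rho> \<nu> \<Longrightarrow> dim \<nu> = dim \<rho> + 1"
    and even_card_face_face: "even (card {\<mu>. F \<rho> \<mu> \<and> F \<mu> \<nu>})"
    and cells_partition: "C = crit \<union> low \<union> up"
    and crit_low_disjoint: "crit \<inter> low = {}"
    and crit_up_disjoint: "crit \<inter> up = {}"
    and low_up_disjoint: "low \<inter> up = {}"
    and pair_low_up: "P \<sigma> \<tau> \<Longrightarrow> \<sigma> \<in> low \<and> \<tau> \<in> up"
    and low_paired: "\<sigma> \<in> low \<Longrightarrow> \<exists>\<tau>. P \<sigma> \<tau>"
    and up_paired: "\<tau> \<in> up \<Longrightarrow> \<exists>\<sigma>. P \<sigma> \<tau>"
    and pair_face: "P \<sigma> \<tau> \<Longrightarrow> F \<sigma> \<tau>"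
    and pair_time: "P \<sigma> \<tau> \<Longrightarrow> t \<sigma> = t \<tau>"
    and face_time: "F \<rho> \<nu> \<Longrightarrow> t \<rho> \<le> t \<nu>"
    and time_eq: "x \<in> C \<Longrightarrow> y \<in> C \<Longrightarrow> t x = t y \<Longrightarrow> x = y \<or> P x y \<or> P y x"
begin

abbreviation boundary :: "'a set \<Rightarrow> 'a set" where
  "boundary x \<equiv> lin (\<lambda>\<nu>. {\<rho>. F \<rho> \<nu>}) x"

lemma faces_subset: "{\<rho>. F \<rho> \<nu>} \<subseteq> C"
  using face_cells by blast

lemma boundary_subset: "boundary x \<subseteq> C"
  using lin_subset_UN[of "\<lambda>\<nu>. {\<rho>. F \<rho> \<nu>}" x] faces_subset by blast

lemma finite_chain: "x \<subseteq> C \<Longrightarrow> finite x"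
  using finite_cells finite_subset by blast

lemma crit_subset: "crit \<subseteq> C" and low_subset: "low \<subseteq> C" and up_subset: "up \<subseteq> C"
  using cells_partition by auto

lemma finite_up_chain: "d \<subseteq> up \<Longrightarrow> finite d"
  using finite_chain up_subset by blast

lemma time_inj_low:
  assumes "\<sigma> \<in> low" "\<sigma>' \<in> low" "t \<sigma> = t \<sigma>'"
  shows "\<sigma> = \<sigma>'"
proof -
  have "\<not> P \<sigma> \<sigma>'" "\<not> P \<sigma>' \<sigma>"
    using pair_low_up assms(1,2) low_up_disjoint by blast+
  then show ?thesis using time_eq[of \<sigma> \<sigma>'] assms low_subset by blast
qed

lemma time_inj_up:
  assumes "\<tau> \<in> up" "\<tau>' \<in> up" "t \<tau> = t \<tau>'"
  shows "\<tau> = \<tau>'"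
proof -
  have "\<not> P \<tau> \<tau>'" "\<not> P \<tau>' \<tau>"
    using pair_low_up assms(1,2) low_up_disjoint by blast+
  then show ?thesis using time_eq[of \<tau> \<tau>'] assms up_subset by blast
qed

lemma face_same_time_pair:
  assumes "F \<rho> \<nu>" "t \<rho> = t \<nu>"
  shows "P \<rho> \<nu>"
proof -
  have dim_\<nu>: "dim \<nu> = dim \<rho> + 1" by (rule face_dim[OF assms(1)])
  have "\<not> P \<nu> \<rho>"
  proof
    assume "P \<nu> \<rho>"
    then have "dim \<rho> = dim \<nu> + 1" by (rule face_dim[OF pair_face])
    with dim_\<nu> show False by simp
  qed
  moreover have "\<rho> \<noteq> \<nu>" using dim_\<nu> by auto
  ultimately show ?thesis using time_eq[of \<rho> \<nu>] face_cells[OF assms(1)] assms(2) by blast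
qed

lemma boundary_boundary: "x \<subseteq> C \<Longrightarrow> boundary (boundary x) = {}"
proof -
  assume "x \<subseteq> C"
  then have "boundary (boundary x) = lin (\<lambda>\<tau>. boundary {\<rho>. F \<rho> \<tau>}) x"
    by (rule lin_lin[OF finite_cells _ faces_subset])
  also have "\<dots> = {}"
  proof (rule lin_eq_emptyI)
    fix \<tau>
    have "{\<sigma>\<in>{\<rho>. F \<rho> \<tau>}. a \<in> {\<rho>. F \<rho> \<sigma>}} = {\<mu>. F a \<mu> \<and> F \<mu> \<tau>}" for a
      by blast
    then show "boundary {\<rho>. F \<rho> \<tau>} = {}"
      unfolding lin_def using even_card_face_face by simp
  qed
  finally show ?thesis .
qed

text \<open>The latest cell of a nonzero chain of upper regular cells is the only one in the chain
  having its partner as a face.\<close>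
lemma up_chain_eq_emptyI:
  assumes "e \<subseteq> up" "boundary e \<inter> low = {}"
  shows "e = {}"
proof (rule ccontr)
  assume "e \<noteq> {}"
  then obtain \<tau> where \<tau>: "\<tau> \<in> e" and latest: "\<forall>\<tau>'\<in>e. t \<tau>' \<le> t \<tau>"
    using ex_max_image[OF finite_up_chain[OF assms(1)], of t] by blast
  obtain \<sigma> where \<sigma>: "P \<sigma> \<tau>" using up_paired assms(1) \<tau>(1) by blast
  have "{\<tau>'\<in>e. \<sigma> \<in> {\<rho>. F \<rho> \<tau>'}} = {\<tau>}"
  proof (intro equalityI subsetI)
    fix \<tau>' assume "\<tau>' \<in> {\<tau>'\<in>e. \<sigma> \<in> {\<rho>. F \<rho> \<tau>'}}"
    then have \<tau>': "\<tau>' \<in> e" "F \<sigma> \<tau>'" by auto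
    have "t \<sigma> = t \<tau>'"
      using face_time[OF \<tau>'(2)] latest \<tau>'(1) pair_time[OF \<sigma>] by force
    then have "P \<sigma> \<tau>'" by (rule face_same_time_pair[OF \<tau>'(2)])
    then show "\<tau>' \<in> {\<tau>}"
      using time_inj_up[of \<tau>' \<tau>] pair_low_up[OF \<sigma>] pair_low_up[OF \<open>P \<sigma> \<tau>'\<close>]
        pair_time[OF \<sigma>] pair_time[OF \<open>P \<sigma> \<tau>'\<close>] by simp
  qed (use \<tau>(1) pair_face[OF \<sigma>] in auto)
  then have "\<sigma> \<in> boundary e" unfolding lin_def by simp
  then show False using assms(2) pair_low_up[OF \<sigma>] by blast
qed

lemma low_free_unique:
  assumes "d \<subseteq> up" "chain_add x (boundary d) \<inter> low = {}"
    and "d' \<subseteq> up" "chain_add x (boundary d') \<inter> low = {}"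
  shows "d = d'"
proof -
  have "boundary (chain_add d d') = chain_add (boundary d) (boundary d')"
    using assms(1,3) by (simp add: lin_chain_add finite_up_chain)
  also have "\<dots> = chain_add (chain_add x (boundary d)) (chain_add x (boundary d'))"
    by (rule chain_add_cancel_left[symmetric])
  finally have "boundary (chain_add d d') \<inter> low = {}"
    using assms(2,4) chain_add_subset[of "chain_add x (boundary d)" "chain_add x (boundary d')"]
    by blast
  moreover have "chain_add d d' \<subseteq> up"
    using assms(1,3) chain_add_subset[of d d'] by blast
  ultimately have "chain_add d d' = {}"
    by (rule up_chain_eq_emptyI[rotated])
  then show ?thesis by (simp only: chain_add_eq_empty_iff)
qed

lemma cancel_latest_low:
  assumes "\<sigma> \<in> x" "P \<sigma> \<tau>" "\<forall>\<sigma>'\<in>x \<inter> low. t \<sigma>' \<le> t \<sigma>"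
  shows "\<forall>\<rho>\<in>chain_add x {\<rho>. F \<rho> \<tau>} \<inter> low. t \<rho> < t \<sigma>"
proof
  fix \<rho> assume \<rho>: "\<rho> \<in> chain_add x {\<rho>. F \<rho> \<tau>} \<inter> low"
  have "\<rho> \<noteq> \<sigma>" using \<rho> assms(1) pair_face[OF assms(2)] by (auto simp: chain_add_def)
  then have "t \<rho> \<noteq> t \<sigma>" using time_inj_low \<rho> pair_low_up[OF assms(2)] by blast
  moreover have "t \<rho> \<le> t \<sigma>"
    using \<rho> assms(3) face_time[of \<rho> \<tau>] pair_time[OF assms(2)] by (auto simp: chain_add_def)
  ultimately show "t \<rho> < t \<sigma>" by simp
qed

lemma card_earlier_low_less:
  assumes "\<sigma> \<in> low" "t \<sigma> < b"
  shows "card {\<sigma>'\<in>low. t \<sigma>' < t \<sigma>} < card {\<sigma>'\<in>low. t \<sigma>' < b}"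
proof (rule psubset_card_mono)
  show "finite {\<sigma>'\<in>low. t \<sigma>' < b}" by (simp add: finite_chain[OF low_subset])
  have "\<sigma> \<in> {\<sigma>'\<in>low. t \<sigma>' < b} - {\<sigma>'\<in>low. t \<sigma>' < t \<sigma>}"
    and "{\<sigma>'\<in>low. t \<sigma>' < t \<sigma>} \<subseteq> {\<sigma>'\<in>low. t \<sigma>' < b}"
    using assms by auto
  then show "{\<sigma>'\<in>low. t \<sigma>' < t \<sigma>} \<subset> {\<sigma>'\<in>low. t \<sigma>' < b}" by blast
qed

lemma chain_add_boundary_add_singleton:
  "finite d \<Longrightarrow>
    chain_add x (boundary (chain_add d {\<tau>})) = chain_add (chain_add x {\<rho>. F \<rho> \<tau>}) (boundary d)"
  by (simp add: lin_chain_add chain_add_assoc chain_add_commute[of "{\<rho>. F \<rho> \<tau>}"])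

lemma exists_low_free_homologous_below:
  assumes "x \<subseteq> C" "\<forall>a\<in>x. dim a = q" "\<forall>\<sigma>\<in>x \<inter> low. t \<sigma> < b"
  shows "\<exists>d. d \<subseteq> up \<and> (\<forall>\<tau>\<in>d. dim \<tau> = q + 1) \<and> chain_add x (boundary d) \<inter> low = {}"
  using assms
proof (induction "card {\<sigma>\<in>low. t \<sigma> < b}" arbitrary: x b rule: less_induct)
  case less
  show ?case
  proof (cases "x \<inter> low = {}")
    case True
    then show ?thesis by (intro exI[of _ "{}"]) simp
  next
    case False
    have "finite (x \<inter> low)" using less.prems(1) finite_chain by blast
    then obtain \<sigma> where \<sigma>: "\<sigma> \<in> x" "\<sigma> \<in> low" and latest: "\<forall>\<sigma>'\<in>x \<inter> low. t \<sigma>' \<le> t \<sigma>"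
      using ex_max_image[of "x \<inter> low" t] False by blast
    obtain \<tau> where \<tau>: "P \<sigma> \<tau>" using low_paired \<sigma>(2) by blast
    have dim_\<tau>: "dim \<tau> = q + 1"
      using face_dim[OF pair_face[OF \<tau>]] less.prems(2) \<sigma>(1) by simp
    define x' where "x' = chain_add x {\<rho>. F \<rho> \<tau>}"
    have x'_cells: "x' \<subseteq> C"
      unfolding x'_def using chain_add_subset[of x] less.prems(1) faces_subset by blast
    have x'_dim: "\<forall>a\<in>x'. dim a = q"
      unfolding x'_def using chain_add_subset[of x] less.prems(2) face_dim dim_\<tau> by fastforce
    have x'_time: "\<forall>\<rho>\<in>x' \<inter> low. t \<rho> < t \<sigma>"
      unfolding x'_def by (rule cancel_latest_low[OF \<sigma>(1) \<tau> latest])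
    have card_less: "card {\<sigma>'\<in>low. t \<sigma>' < t \<sigma>} < card {\<sigma>'\<in>low. t \<sigma>' < b}"
      using card_earlier_low_less \<sigma> less.prems(3) by blast
    obtain d' where d': "d' \<subseteq> up" "\<forall>\<tau>\<in>d'. dim \<tau> = q + 1"
        "chain_add x' (boundary d') \<inter> low = {}"
      using less.hyps[OF card_less x'_cells x'_dim x'_time] by blast
    have "chain_add d' {\<tau>} \<subseteq> up" "\<forall>\<tau>'\<in>chain_add d' {\<tau>}. dim \<tau>' = q + 1"
      using chain_add_subset[of d'] d' pair_low_up[OF \<tau>] dim_\<tau> by blast+
    moreover have "chain_add x (boundary (chain_add d' {\<tau>})) = chain_add x' (boundary d')"
      unfolding x'_def by (rule chain_add_boundary_add_singleton[OF finite_up_chain[OF d'(1)]])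
    ultimately show ?thesis using d'(3) by metis
  qed
qed

lemma exists_low_free_homologous:
  assumes "x \<subseteq> C" "\<forall>a\<in>x. dim a = q"
  shows "\<exists>d. d \<subseteq> up \<and> (\<forall>\<tau>\<in>d. dim \<tau> = q + 1) \<and> chain_add x (boundary d) \<inter> low = {}"
proof (rule exists_low_free_homologous_below[OF assms, of "Max (t ` C) + 1"])
  show "\<forall>\<sigma>\<in>x \<inter> low. t \<sigma> < Max (t ` C) + 1"
  proof
    fix \<sigma> assume "\<sigma> \<in> x \<inter> low"
    then have "t \<sigma> \<le> Max (t ` C)" using assms(1) finite_cells by auto
    then show "t \<sigma> < Max (t ` C) + 1" by simp
  qed
qed

lemma lin_reference_eq:
  assumes f: "is_reference C F dim crit up f"
    and y: "y \<subseteq> C" and d: "d \<subseteq> up" "chain_add y (boundary d) \<inter> low = {}"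
  shows "lin f y = crit \<inter> chain_add y (boundary d)"
proof -
  define y' where "y' = chain_add y (boundary d)"
  have y'_cells: "y' \<subseteq> C"
    unfolding y'_def using chain_add_subset[of y "boundary d"] y boundary_subset by blast
  have "lin f (boundary d) = lin (\<lambda>\<tau>. lin f {\<rho>. F \<rho> \<tau>}) d"
    by (rule lin_lin[OF finite_cells _ faces_subset]) (use d(1) up_subset in blast)
  also have "\<dots> = {}"
    by (rule lin_eq_emptyI) (use f d(1) in \<open>auto simp: is_reference_def\<close>)
  finally have boundary_vanishes: "lin f (boundary d) = {}" .
  have "lin f y = lin f (chain_add y' (boundary d))"
    unfolding y'_def by simp
  also have "\<dots> = chain_add (lin f y') (lin f (boundary d))"
    by (rule lin_chain_add[OF finite_chain[OF y'_cells] finite_chain[OF boundary_subset]])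
  also have "\<dots> = lin f y'"
    using boundary_vanishes by simp
  also have "\<dots> = lin (\<lambda>\<sigma>. crit \<inter> {\<sigma>}) y'"
  proof (rule lin_cong)
    fix \<sigma> assume "\<sigma> \<in> y'"
    then have "\<sigma> \<in> crit \<or> \<sigma> \<in> up"
      using y'_cells d(2) cells_partition unfolding y'_def by blast
    then show "f \<sigma> = crit \<inter> {\<sigma>}"
      using f crit_up_disjoint by (auto simp: is_reference_def)
  qed
  also have "\<dots> = crit \<inter> y'"
    by (simp only: lin_Int lin_singleton_fun)
  finally show ?thesis unfolding y'_def .
qed

lemma is_reference_unique:
  assumes "is_reference C F dim crit up f" "is_reference C F dim crit up g"
  shows "f = g"
proof
  fix x
  show "f x = g x"
  proof (cases "x \<in> C")
    case False
    then show ?thesis using assms by (simp add: is_reference_def)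
  next
    case True
    then obtain d where "d \<subseteq> up" "chain_add {x} (boundary d) \<inter> low = {}"
      using exists_low_free_homologous[of "{x}" "dim x"] by auto
    then show ?thesis
      using lin_reference_eq[OF assms(1), of "{x}" d] lin_reference_eq[OF assms(2), of "{x}" d] True
      by simp
  qed
qed

lemma dim_chain_add_boundary:
  assumes "\<forall>\<tau>\<in>d. dim \<tau> = dim x + 1" "b \<in> chain_add {x} (boundary d)"
  shows "dim b = dim x"
proof (cases "b = x")
  case False
  then obtain \<tau> where "\<tau> \<in> d" "F b \<tau>"
    using assms(2) chain_add_subset[of "{x}"] lin_subset_UN[of "\<lambda>\<nu>. {\<rho>. F \<rho> \<nu>}" d] by blast
  then show ?thesis using assms(1) face_dim by force
qed simp

text \<open>Reducing a chain cell by cell is linear, because the reduction is unique.\<close>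
lemma lin_reduction_cellwise:
  assumes D: "\<And>a. a \<in> y \<Longrightarrow> D a \<subseteq> up \<and> chain_add {a} (boundary (D a)) \<inter> low = {}"
    and y: "y \<subseteq> C" and d: "d \<subseteq> up" "chain_add y (boundary d) \<inter> low = {}"
  shows "lin (\<lambda>a. crit \<inter> chain_add {a} (boundary (D a))) y = crit \<inter> chain_add y (boundary d)"
proof -
  define G where "G a = chain_add {a} (boundary (D a))" for a
  have "boundary (lin D y) = lin (\<lambda>a. boundary (D a)) y"
    by (rule lin_lin[OF finite_cells y]) (use D up_subset in blast)
  then have G: "lin G y = chain_add y (boundary (lin D y))"
    unfolding G_def by (simp add: lin_chain_add_fun finite_chain[OF y] lin_singleton_fun)
  have "low \<inter> lin G y = {}"
    unfolding lin_Int[symmetric] by (rule lin_eq_emptyI) (use D in \<open>auto simp: G_def\<close>)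
  moreover have "lin D y \<subseteq> up"
    using lin_subset_UN[of D y] D by blast
  ultimately have "lin D y = d"
    using low_free_unique[OF _ _ d] G by (simp add: Int_commute)
  then show ?thesis
    using G unfolding lin_Int G_def by simp
qed

lemma reference_exists: "\<exists>f. is_reference C F dim crit up f"
proof -
  have "\<exists>d. d \<subseteq> up \<and> (\<forall>\<tau>\<in>d. dim \<tau> = dim a + 1) \<and> chain_add {a} (boundary d) \<inter> low = {}"
    if "a \<in> C" for a
    using exists_low_free_homologous[of "{a}" "dim a"] that by simp
  then obtain D where D: "\<And>a. a \<in> C \<Longrightarrow> D a \<subseteq> up \<and> chain_add {a} (boundary (D a)) \<inter> low = {}"
    and D_dim: "\<And>a. a \<in> C \<Longrightarrow> \<forall>\<tau>\<in>D a. dim \<tau> = dim a + 1"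
    by metis
  define f where "f a = (if a \<in> C then crit \<inter> chain_add {a} (boundary (D a)) else {})" for a
  have lin_f: "lin f y = crit \<inter> chain_add y (boundary d)"
    if y: "y \<subseteq> C" and d: "d \<subseteq> up" "chain_add y (boundary d) \<inter> low = {}" for y d
  proof -
    have "lin f y = lin (\<lambda>a. crit \<inter> chain_add {a} (boundary (D a))) y"
      by (rule lin_cong) (use y in \<open>auto simp: f_def\<close>)
    also have "\<dots> = crit \<inter> chain_add y (boundary d)"
      by (rule lin_reduction_cellwise[OF _ y d]) (use D y in blast)
    finally show ?thesis .
  qed
  have "f x \<subseteq> {c\<in>crit. dim c = dim x}" if "x \<in> C" for x
    using that dim_chain_add_boundary[OF D_dim] by (auto simp: f_def)
  moreover have "f c = {c}" if c: "c \<in> crit" for c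
    using lin_f[of "{c}" "{}"] c crit_subset crit_low_disjoint by auto
  moreover have "f \<tau> = {} \<and> lin f {\<rho>. F \<rho> \<tau>} = {}" if \<tau>: "\<tau> \<in> up" for \<tau>
  proof
    have "f \<tau> = crit \<inter> chain_add {\<tau>} (boundary {})"
      using lin_f[of "{\<tau>}" "{}"] \<tau> up_subset low_up_disjoint by auto
    then show "f \<tau> = {}" using \<tau> crit_up_disjoint by auto
    show "lin f {\<rho>. F \<rho> \<tau>} = {}"
      using lin_f[of "{\<rho>. F \<rho> \<tau>}" "{\<tau>}"] faces_subset \<tau> by simp
  qed
  ultimately have "is_reference C F dim crit up f"
    unfolding is_reference_def by (simp add: f_def)
  then show ?thesis by blast
qed

lemma is_reference_reference: "is_reference C F dim crit up (reference C F dim crit up)"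
  unfolding reference_def using reference_exists is_reference_unique by (metis theI)

lemma lin_reference:
  "y \<subseteq> C \<Longrightarrow> d \<subseteq> up \<Longrightarrow> chain_add y (boundary d) \<inter> low = {} \<Longrightarrow>
    lin (reference C F dim crit up) y = crit \<inter> chain_add y (boundary d)"
  by (rule lin_reference_eq[OF is_reference_reference])

lemma dual: "morse_matching C (\<lambda>x y. F y x) (\<lambda>x. - dim x) crit up low (\<lambda>x y. P y x) (\<lambda>x. - t x)"
proof
  fix \<rho> \<nu> \<sigma> \<tau> x y
  show "finite C" by (rule finite_cells)
  show "F \<nu> \<rho> \<Longrightarrow> \<rho> \<in> C \<and> \<nu> \<in> C" using face_cells by blast
  show "F \<nu> \<rho> \<Longrightarrow> - dim \<nu> = - dim \<rho> + 1" using face_dim by force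
  show "even (card {\<mu>. F \<mu> \<rho> \<and> F \<nu> \<mu>})"
    using even_card_face_face[of \<nu> \<rho>] by (simp add: conj_commute)
  show "C = crit \<union> up \<union> low" using cells_partition by blast
  show "crit \<inter> up = {}" "crit \<inter> low = {}" "up \<inter> low = {}"
    using crit_up_disjoint crit_low_disjoint low_up_disjoint by blast+
  show "P \<tau> \<sigma> \<Longrightarrow> \<sigma> \<in> up \<and> \<tau> \<in> low" using pair_low_up by blast
  show "\<sigma> \<in> up \<Longrightarrow> \<exists>\<tau>. P \<tau> \<sigma>" by (rule up_paired)
  show "\<tau> \<in> low \<Longrightarrow> \<exists>\<sigma>. P \<tau> \<sigma>" by (rule low_paired)
  show "P \<tau> \<sigma> \<Longrightarrow> F \<tau> \<sigma>" by (rule pair_face)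
  show "P \<tau> \<sigma> \<Longrightarrow> - t \<sigma> = - t \<tau>" using pair_time by force
  show "F \<nu> \<rho> \<Longrightarrow> - t \<rho> \<le> - t \<nu>" using face_time by force
  show "x \<in> C \<Longrightarrow> y \<in> C \<Longrightarrow> - t x = - t y \<Longrightarrow> x = y \<or> P y x \<or> P x y"
    using time_eq by force
qed

abbreviation coreference :: "'a \<Rightarrow> 'a set" where
  "coreference \<equiv> reference C (\<lambda>x y. F y x) (\<lambda>x. - dim x) crit low"

text \<open>By duality \<open>coreference \<nu>\<close> is the critical part of \<open>\<nu>\<close> plus a coboundary. As \<open>y\<close> has no
  lower regular cells, the parity of its intersection with \<open>coreference \<nu>\<close> is therefore that of
  its intersection with \<open>{\<nu>}\<close>, since coboundaries meet cycles evenly.\<close>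
lemma lin_extension_critical_part:
  assumes y: "y \<subseteq> C" "y \<inter> low = {}" "boundary y = {}"
  shows "lin (\<lambda>\<kappa>. {\<nu>\<in>C. \<kappa> \<in> coreference \<nu>}) (crit \<inter> y) = y"
proof (rule set_eqI)
  interpret dual: morse_matching C "\<lambda>x y. F y x" "\<lambda>x. - dim x" crit up low "\<lambda>x y. P y x" "\<lambda>x. - t x"
    by (rule dual)
  fix \<nu>
  show "\<nu> \<in> lin (\<lambda>\<kappa>. {\<nu>\<in>C. \<kappa> \<in> coreference \<nu>}) (crit \<inter> y) \<longleftrightarrow> \<nu> \<in> y"
  proof (cases "\<nu> \<in> C")
    case False
    then show ?thesis
      using lin_subset_UN[of "\<lambda>\<kappa>. {\<nu>\<in>C. \<kappa> \<in> coreference \<nu>}" "crit \<inter> y"] y(1) by blast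
  next
    case True
    then obtain e where e: "e \<subseteq> low" "chain_add {\<nu>} (dual.boundary e) \<inter> up = {}"
      using dual.exists_low_free_homologous[of "{\<nu>}" "- dim \<nu>"] by auto
    have "coreference \<nu> = crit \<inter> chain_add {\<nu>} (dual.boundary e)"
      using dual.lin_reference[of "{\<nu>}" e] True e by simp
    then have "{\<kappa>\<in>crit \<inter> y. \<nu> \<in> {\<nu>\<in>C. \<kappa> \<in> coreference \<nu>}} = y \<inter> chain_add {\<nu>} (dual.boundary e)"
      using True e(2) y(1,2) cells_partition by auto
    then have "\<nu> \<in> lin (\<lambda>\<kappa>. {\<nu>\<in>C. \<kappa> \<in> coreference \<nu>}) (crit \<inter> y) \<longleftrightarrow>
        odd (card (y \<inter> chain_add {\<nu>} (dual.boundary e)))"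
      by (simp add: lin_def)
    also have "\<dots> \<longleftrightarrow> odd (card (y \<inter> {\<nu>})) \<noteq> odd (card (y \<inter> dual.boundary e))"
      by (rule odd_card_Int_chain_add[OF finite_chain[OF y(1)]])
    also have "odd (card (y \<inter> dual.boundary e)) \<longleftrightarrow> odd (card (e \<inter> boundary y))"
      by (rule odd_card_Int_lin_transpose) (use finite_chain y(1) e(1) low_subset in blast)+
    finally show ?thesis using y(3) by (cases "\<nu> \<in> y") auto
  qed
qed

theorem extension_reference_homologous:
  assumes z: "z \<subseteq> C" "\<forall>a\<in>z. dim a = q" "boundary z = {}"
  shows "\<exists>d \<subseteq> {x\<in>C. dim x = q + 1}.
    chain_add (lin (\<lambda>\<kappa>. {\<nu>\<in>C. \<kappa> \<in> coreference \<nu>}) (lin (reference C F dim crit up) z)) z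
      = boundary d"
proof -
  obtain d where d: "d \<subseteq> up" "\<forall>\<tau>\<in>d. dim \<tau> = q + 1" "chain_add z (boundary d) \<inter> low = {}"
    using exists_low_free_homologous[OF z(1,2)] by blast
  define z' where "z' = chain_add z (boundary d)"
  have z'_cells: "z' \<subseteq> C"
    unfolding z'_def using chain_add_subset[of z "boundary d"] z(1) boundary_subset by blast
  have "boundary z' = chain_add (boundary z) (boundary (boundary d))"
    unfolding z'_def
    by (rule lin_chain_add[OF finite_chain[OF z(1)] finite_chain[OF boundary_subset]])
  then have "boundary z' = {}"
    using z(3) boundary_boundary d(1) up_subset by auto
  then have "lin (\<lambda>\<kappa>. {\<nu>\<in>C. \<kappa> \<in> coreference \<nu>}) (lin (reference C F dim crit up) z) = z'"
    using lin_reference[OF z(1) d(1,3)] lin_extension_critical_part[OF z'_cells d(3)[folded z'_def]]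
    by (simp add: z'_def)
  then have "chain_add (lin (\<lambda>\<kappa>. {\<nu>\<in>C. \<kappa> \<in> coreference \<nu>}) (lin (reference C F dim crit up) z)) z
      = boundary d"
    by (simp add: z'_def chain_add_commute)
  moreover have "d \<subseteq> {x\<in>C. dim x = q + 1}"
    using d(1,2) up_subset by blast
  ultimately show ?thesis by blast
qed

end

section \<open>Morse sequences\<close>

definition codim1_face :: "'v set set \<Rightarrow> 'v set \<Rightarrow> 'v set \<Rightarrow> bool" where
  "codim1_face K \<rho> \<nu> \<longleftrightarrow> \<rho> \<in> K \<and> \<nu> \<in> K \<and> \<rho> \<subseteq> \<nu> \<and> card \<nu> = card \<rho> + 1"

lemma bd_eq_codim1_faces: "\<nu> \<in> K \<Longrightarrow> bd K \<nu> = {\<rho>. codim1_face K \<rho> \<nu>}"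
  unfolding bd_def codim1_face_def by auto

lemma cobd_eq_codim1_cofaces: "\<sigma> \<in> K \<Longrightarrow> cobd K \<sigma> = {\<rho>. codim1_face K \<sigma> \<rho>}"
  unfolding cobd_def codim1_face_def by auto

lemma simplicial_complexD:
  assumes "simplicial_complex K"
  shows "finite K" and "\<sigma> \<in> K \<Longrightarrow> finite \<sigma>" and "\<sigma> \<in> K \<Longrightarrow> \<sigma> \<noteq> {}"
    and "\<sigma> \<in> K \<Longrightarrow> \<tau> \<subseteq> \<sigma> \<Longrightarrow> \<tau> \<noteq> {} \<Longrightarrow> \<tau> \<in> K"
  using assms unfolding simplicial_complex_def by blast+

lemma simplicial_complex_subset:
  assumes "simplicial_complex K" "K' \<subseteq> K"
    and "\<And>\<sigma> \<tau>. \<sigma> \<in> K' \<Longrightarrow> \<tau> \<subseteq> \<sigma> \<Longrightarrow> \<tau> \<noteq> {} \<Longrightarrow> \<tau> \<in> K'"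
  shows "simplicial_complex K'"
proof -
  have "finite K'"
    using finite_subset[OF assms(2) simplicial_complexD(1)[OF assms(1)]] .
  moreover have "\<forall>\<sigma>\<in>K'. finite \<sigma> \<and> \<sigma> \<noteq> {}"
    using assms(2) simplicial_complexD(2,3)[OF assms(1)] by blast
  ultimately show ?thesis
    using assms(3) unfolding simplicial_complex_def by blast
qed

lemma simplicial_complex_Diff_facet:
  assumes "simplicial_complex K" "facet K \<nu>"
  shows "simplicial_complex (K - {\<nu>})"
proof (rule simplicial_complex_subset[OF assms(1) Diff_subset])
  fix \<sigma> \<tau> assume "\<sigma> \<in> K - {\<nu>}" "\<tau> \<subseteq> \<sigma>" "\<tau> \<noteq> {}"
  then show "\<tau> \<in> K - {\<nu>}"
    using simplicial_complexD(4)[OF assms(1)] assms(2) unfolding facet_def by blast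
qed

lemma simplicial_complex_Diff_free_pair:
  assumes "simplicial_complex K" "free_pair K \<sigma> \<tau>"
  shows "simplicial_complex (K - {\<sigma>, \<tau>})"
proof (rule simplicial_complex_subset[OF assms(1) Diff_subset])
  fix \<rho> \<pi> assume \<rho>: "\<rho> \<in> K - {\<sigma>, \<tau>}" and \<pi>: "\<pi> \<subseteq> \<rho>" "\<pi> \<noteq> {}"
  have "\<pi> \<noteq> \<sigma>" "\<pi> \<noteq> \<tau>"
    using \<rho> \<pi>(1) assms(2) unfolding free_pair_def by blast+
  then show "\<pi> \<in> K - {\<sigma>, \<tau>}"
    using simplicial_complexD(4)[OF assms(1)] \<rho> \<pi> by blast
qed

lemma free_pair_card:
  assumes K: "simplicial_complex K" and free: "free_pair K \<sigma> \<tau>"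
  shows "card \<tau> = card \<sigma> + 1"
proof -
  have \<sigma>\<tau>: "\<sigma> \<subset> \<tau>" "\<tau> \<in> K" using free unfolding free_pair_def by blast+
  then obtain x where x: "x \<in> \<tau>" "x \<notin> \<sigma>" by blast
  have "insert x \<sigma> \<in> K"
    by (rule simplicial_complexD(4)[OF K \<sigma>\<tau>(2)]) (use \<sigma>\<tau>(1) x(1) in auto)
  then have "insert x \<sigma> = \<tau>"
    using free x(2) unfolding free_pair_def by blast
  moreover have "finite \<sigma>"
    using simplicial_complexD(2)[OF K \<sigma>\<tau>(2)] \<sigma>\<tau>(1) finite_subset by blast
  ultimately show ?thesis using x(2) by auto
qed

text \<open>The faces between \<open>\<rho>\<close> and a simplex \<open>\<nu>\<close> with two more vertices are
  \<open>\<rho>\<close> plus one of the two missing vertices.\<close>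
lemma even_card_codim1_face_codim1_face:
  assumes K: "simplicial_complex K"
  shows "even (card {\<mu>. codim1_face K \<rho> \<mu> \<and> codim1_face K \<mu> \<nu>})"
proof (cases "\<rho> \<in> K \<and> \<nu> \<in> K \<and> \<rho> \<subseteq> \<nu> \<and> card \<nu> = card \<rho> + 2")
  case False
  then have no_faces: "{\<mu>. codim1_face K \<rho> \<mu> \<and> codim1_face K \<mu> \<nu>} = {}"
    unfolding codim1_face_def by force
  show ?thesis unfolding no_faces by simp
next
  case True
  then have fin: "finite \<nu>" "finite \<rho>"
    using simplicial_complexD(2)[OF K] finite_subset by blast+
  then have "card (\<nu> - \<rho>) = 2" using True by (simp add: card_Diff_subset)
  then obtain a b where ab: "\<nu> - \<rho> = {a, b}" "a \<noteq> b" by (meson card_2_iff)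
  have "{\<mu>. codim1_face K \<rho> \<mu> \<and> codim1_face K \<mu> \<nu>} = {insert a \<rho>, insert b \<rho>}"
  proof (intro equalityI subsetI)
    fix \<mu> assume "\<mu> \<in> {\<mu>. codim1_face K \<rho> \<mu> \<and> codim1_face K \<mu> \<nu>}"
    then have \<mu>: "\<rho> \<subseteq> \<mu>" "\<mu> \<subseteq> \<nu>" "card \<mu> = card \<rho> + 1" unfolding codim1_face_def by auto
    then have "card (\<mu> - \<rho>) = 1" using fin finite_subset by (simp add: card_Diff_subset)
    then obtain c where c: "\<mu> - \<rho> = {c}" by (meson card_1_singletonE)
    then have "\<mu> = insert c \<rho>" "c \<in> {a, b}" using \<mu>(1,2) ab(1) by blast+
    then show "\<mu> \<in> {insert a \<rho>, insert b \<rho>}" by blast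
  next
    fix \<mu> assume "\<mu> \<in> {insert a \<rho>, insert b \<rho>}"
    then obtain c where c: "\<mu> = insert c \<rho>" "c \<in> \<nu>" "c \<notin> \<rho>" using ab(1) by blast
    have "\<mu> \<subseteq> \<nu>" "\<mu> \<noteq> {}" using c(1,2) True by blast+
    then have "\<mu> \<in> K" using simplicial_complexD(4)[OF K] True by blast
    then show "\<mu> \<in> {\<mu>. codim1_face K \<rho> \<mu> \<and> codim1_face K \<mu> \<nu>}"
      using c True fin unfolding codim1_face_def by auto
  qed
  moreover have "insert a \<rho> \<noteq> insert b \<rho>" using ab by blast
  ultimately show ?thesis by simp
qed

locale morse_sequence =
  fixes K :: "'v set set" and W :: "'v set set list"
  assumes complex: "simplicial_complex K" and sequence: "morse_seq W K"
begin

definition added :: "nat \<Rightarrow> 'v set set" where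
  "added i = W ! Suc i - W ! i"

definition birth :: "'v set \<Rightarrow> nat" where
  "birth a = (LEAST i. a \<in> W ! Suc i)"

definition matched :: "'v set \<Rightarrow> 'v set \<Rightarrow> bool" where
  "matched \<sigma> \<tau> \<longleftrightarrow> (\<exists>i. Suc i < length W \<and> \<sigma> \<subset> \<tau> \<and> added i = {\<sigma>, \<tau>})"

lemma W_first: "W ! 0 = {}" and W_last: "W ! (length W - 1) = K"
  using sequence unfolding morse_seq_def by (auto simp: last_conv_nth)

lemma step_cases:
  assumes "Suc i < length W"
  obtains (filling) \<nu> where "facet (W ! Suc i) \<nu>" "W ! i = W ! Suc i - {\<nu>}" "added i = {\<nu>}"
  | (expansion) \<sigma> \<tau> where "free_pair (W ! Suc i) \<sigma> \<tau>" "W ! i = W ! Suc i - {\<sigma>, \<tau>}"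
      "added i = {\<sigma>, \<tau>}"
proof -
  have "elem_expansion (W ! Suc i) (W ! i) \<or> elem_filling (W ! Suc i) (W ! i)"
    using sequence assms unfolding morse_seq_def by blast
  then show ?thesis
  proof
    assume "elem_expansion (W ! Suc i) (W ! i)"
    then obtain \<sigma> \<tau> where "free_pair (W ! Suc i) \<sigma> \<tau>" "W ! i = W ! Suc i - {\<sigma>, \<tau>}"
      unfolding elem_expansion_def by (elim exE conjE)
    moreover from this have "added i = {\<sigma>, \<tau>}"
      unfolding added_def free_pair_def by blast
    ultimately show ?thesis by (rule expansion)
  next
    assume "elem_filling (W ! Suc i) (W ! i)"
    then obtain \<nu> where "facet (W ! Suc i) \<nu>" "W ! i = W ! Suc i - {\<nu>}"
      unfolding elem_filling_def by (elim exE conjE)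
    moreover from this have "added i = {\<nu>}"
      unfolding added_def facet_def by blast
    ultimately show ?thesis by (rule filling)
  qed
qed

lemma W_step_mono: "Suc i < length W \<Longrightarrow> W ! i \<subseteq> W ! Suc i"
  by (cases rule: step_cases) auto

lemma W_mono: "i \<le> j \<Longrightarrow> j < length W \<Longrightarrow> W ! i \<subseteq> W ! j"
proof (induction j)
  case (Suc j)
  then show ?case using W_step_mono[of j] by (cases "i = Suc j") auto
qed simp

lemma W_subset: "i < length W \<Longrightarrow> W ! i \<subseteq> K"
  using W_mono[of i "length W - 1"] W_last by simp

lemma simplicial_complex_W:
  assumes "i < length W"
  shows "simplicial_complex (W ! i)"
proof (rule inc_induct[of i "length W - 1"])
  show "i \<le> length W - 1" using assms by simp
  show "simplicial_complex (W ! (length W - 1))" using W_last complex by simp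
next
  fix n assume n: "n < length W - 1" and IH: "simplicial_complex (W ! Suc n)"
  from n have "Suc n < length W" by simp
  then show "simplicial_complex (W ! n)"
  proof (cases rule: step_cases)
    case (filling \<nu>)
    then show ?thesis using simplicial_complex_Diff_facet[OF IH] by simp
  next
    case (expansion \<sigma> \<tau>)
    then show ?thesis using simplicial_complex_Diff_free_pair[OF IH] by simp
  qed
qed

lemma added_subset: "Suc i < length W \<Longrightarrow> added i \<subseteq> K"
  unfolding added_def using W_subset by blast

lemma birth_less: "a \<in> K \<Longrightarrow> Suc (birth a) < length W"
  and added_birth: "a \<in> K \<Longrightarrow> a \<in> added (birth a)"
proof -
  assume "a \<in> K"
  then obtain m where m: "length W - 1 = Suc m" "a \<in> W ! Suc m"
    using W_first W_last by (metis empty_iff not0_implies_Suc)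
  then have "birth a \<le> m" "a \<in> W ! Suc (birth a)"
    unfolding birth_def by (auto intro: Least_le LeastI)
  moreover have "a \<notin> W ! birth a"
  proof (cases "birth a")
    case (Suc j)
    then show ?thesis using not_less_Least[of j "\<lambda>i. a \<in> W ! Suc i"] by (simp add: birth_def)
  qed (simp add: W_first)
  ultimately show "Suc (birth a) < length W" "a \<in> added (birth a)"
    using m(1) by (auto simp: added_def)
qed

lemma birth_eqI:
  assumes "Suc i < length W" "a \<in> added i"
  shows "birth a = i"
proof (rule antisym)
  show "birth a \<le> i" using assms(2) unfolding birth_def added_def by (auto intro: Least_le)
  show "i \<le> birth a"
  proof (rule ccontr)
    assume "\<not> i \<le> birth a"
    then have "W ! Suc (birth a) \<subseteq> W ! i" using W_mono assms(1) by simp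
    moreover have "a \<in> W ! Suc (birth a)"
      using assms(2) unfolding birth_def added_def by (auto intro: LeastI)
    ultimately show False using assms(2) by (auto simp: added_def)
  qed
qed

lemma added_unique:
  "Suc i < length W \<Longrightarrow> Suc j < length W \<Longrightarrow> a \<in> added i \<Longrightarrow> a \<in> added j \<Longrightarrow> i = j"
  using birth_eqI by metis

lemma added_pair_free:
  assumes "Suc i < length W" "added i = {\<sigma>, \<tau>}" "\<sigma> \<subset> \<tau>"
  shows "free_pair (W ! Suc i) \<sigma> \<tau>"
  using assms(1)
proof (cases rule: step_cases)
  case (filling \<nu>)
  then show ?thesis using assms(2,3) by auto
next
  case (expansion \<sigma>' \<tau>')
  then have "\<sigma>' \<subset> \<tau>'" unfolding free_pair_def by blast
  then have "\<sigma>' = \<sigma> \<and> \<tau>' = \<tau>"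
    using expansion(3) assms(2,3) by (auto simp: doubleton_eq_iff)
  then show ?thesis using expansion(1) by simp
qed

lemma matched_card: "matched \<sigma> \<tau> \<Longrightarrow> card \<tau> = card \<sigma> + 1"
  unfolding matched_def
  using free_pair_card[OF simplicial_complex_W added_pair_free] by blast

lemma matched_birth: "matched \<sigma> \<tau> \<Longrightarrow> \<sigma> \<in> K \<and> \<tau> \<in> K \<and> birth \<sigma> = birth \<tau>"
  unfolding matched_def using birth_eqI added_subset by (metis insertCI subsetD)

lemma lower_regular_eq: "lower_regular W = {\<sigma>. \<exists>\<tau>. matched \<sigma> \<tau>}"
  unfolding lower_regular_def matched_def added_def by blast

lemma upper_regular_eq: "upper_regular W = {\<tau>. \<exists>\<sigma>. matched \<sigma> \<tau>}"
  unfolding upper_regular_def matched_def added_def by blast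

lemma critical_added: "\<nu> \<in> critical W \<Longrightarrow> \<exists>i. Suc i < length W \<and> added i = {\<nu>}"
  unfolding critical_def added_def by blast

lemma critical_subset: "critical W \<subseteq> K"
  using critical_added added_subset by blast

lemma same_birth:
  assumes "x \<in> K" "y \<in> K" "birth x = birth y"
  shows "x = y \<or> matched x y \<or> matched y x"
  using birth_less[OF assms(1)]
proof (cases rule: step_cases)
  case (filling \<nu>)
  then show ?thesis using added_birth[OF assms(1)] added_birth[OF assms(2)] assms(3) by simp
next
  case (expansion \<sigma> \<tau>)
  then have "matched \<sigma> \<tau>"
    unfolding matched_def free_pair_def using birth_less[OF assms(1)] by blast
  then show ?thesis
    using expansion(3) added_birth[OF assms(1)] added_birth[OF assms(2)] assms(3) by auto
qed

lemma birth_mono: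
  assumes "codim1_face K \<rho> \<nu>"
  shows "birth \<rho> \<le> birth \<nu>"
proof -
  have "\<nu> \<in> W ! Suc (birth \<nu>)" "\<rho> \<subseteq> \<nu>" "\<rho> \<noteq> {}"
    using assms added_birth simplicial_complexD(3)[OF complex]
    unfolding codim1_face_def added_def by auto
  then have "\<rho> \<in> W ! Suc (birth \<nu>)"
    using simplicial_complexD(4)[OF simplicial_complex_W[OF birth_less]] assms
    unfolding codim1_face_def by blast
  then show ?thesis unfolding birth_def by (simp add: Least_le)
qed

lemma matched_codim1_face: "matched \<sigma> \<tau> \<Longrightarrow> codim1_face K \<sigma> \<tau>"
proof -
  assume m: "matched \<sigma> \<tau>"
  then have "\<sigma> \<subseteq> \<tau>" unfolding matched_def by blast
  then show ?thesis using matched_birth[OF m] matched_card[OF m] unfolding codim1_face_def by simp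
qed

lemma complex_eq_critical_regular: "K = critical W \<union> lower_regular W \<union> upper_regular W"
proof (intro equalityI subsetI)
  fix a assume a: "a \<in> K"
  from birth_less[OF a] show "a \<in> critical W \<union> lower_regular W \<union> upper_regular W"
  proof (cases rule: step_cases)
    case (filling \<nu>)
    then have "\<nu> \<in> critical W"
      using birth_less[OF a] unfolding critical_def elem_filling_def added_def by blast
    then show ?thesis using filling(3) added_birth[OF a] by simp
  next
    case (expansion \<sigma> \<tau>)
    then have "matched \<sigma> \<tau>"
      using birth_less[OF a] unfolding matched_def free_pair_def by blast
    then show ?thesis
      using expansion(3) added_birth[OF a] unfolding lower_regular_eq upper_regular_eq by auto
  qed
qed (use critical_subset matched_birth in \<open>auto simp: lower_regular_eq upper_regular_eq\<close>)

lemma critical_lower_regular_disjoint: "critical W \<inter> lower_regular W = {}"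
proof (rule equals0I)
  fix a assume "a \<in> critical W \<inter> lower_regular W"
  then obtain i \<tau> where i: "Suc i < length W" "added i = {a}" and "matched a \<tau>"
    using critical_added unfolding lower_regular_eq by blast
  then obtain j where "Suc j < length W" "a \<subset> \<tau>" "added j = {a, \<tau>}"
    unfolding matched_def by blast
  with i show False using added_unique[of i j a] by auto
qed

lemma critical_upper_regular_disjoint: "critical W \<inter> upper_regular W = {}"
proof (rule equals0I)
  fix a assume "a \<in> critical W \<inter> upper_regular W"
  then obtain i \<sigma> where i: "Suc i < length W" "added i = {a}" and "matched \<sigma> a"
    using critical_added unfolding upper_regular_eq by blast
  then obtain j where "Suc j < length W" "\<sigma> \<subset> a" "added j = {\<sigma>, a}"
    unfolding matched_def by blast
  with i show False using added_unique[of i j a] by auto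
qed

lemma lower_upper_regular_disjoint: "lower_regular W \<inter> upper_regular W = {}"
proof (rule equals0I)
  fix a assume "a \<in> lower_regular W \<inter> upper_regular W"
  then obtain \<sigma> \<tau> where "matched a \<tau>" "matched \<sigma> a"
    unfolding lower_regular_eq upper_regular_eq by blast
  obtain i where i: "Suc i < length W" "a \<subset> \<tau>" "added i = {a, \<tau>}"
    using \<open>matched a \<tau>\<close> unfolding matched_def by blast
  obtain j where j: "Suc j < length W" "\<sigma> \<subset> a" "added j = {\<sigma>, a}"
    using \<open>matched \<sigma> a\<close> unfolding matched_def by blast
  have "{a, \<tau>} = {\<sigma>, a}" using i j added_unique[of i j a] by simp
  then have "\<tau> = \<sigma> \<or> \<tau> = a" by blast
  then show False using i(2) j(2) by (metis less_asym)
qed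

lemma morse_matching:
  "morse_matching K (codim1_face K) (\<lambda>x. int (card x)) (critical W) (lower_regular W)
     (upper_regular W) matched (\<lambda>x. int (birth x))"
proof
  fix \<rho> \<nu> \<sigma> \<tau> x y
  show "finite K" using simplicial_complexD(1)[OF complex] .
  show "codim1_face K \<rho> \<nu> \<Longrightarrow> \<rho> \<in> K \<and> \<nu> \<in> K"
    and "codim1_face K \<rho> \<nu> \<Longrightarrow> int (card \<nu>) = int (card \<rho>) + 1"
    unfolding codim1_face_def by simp_all
  show "even (card {\<mu>. codim1_face K \<rho> \<mu> \<and> codim1_face K \<mu> \<nu>})"
    by (rule even_card_codim1_face_codim1_face[OF complex])
  show "matched \<sigma> \<tau> \<Longrightarrow> \<sigma> \<in> lower_regular W \<and> \<tau> \<in> upper_regular W"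
    and "\<sigma> \<in> lower_regular W \<Longrightarrow> \<exists>\<tau>. matched \<sigma> \<tau>"
    and "\<tau> \<in> upper_regular W \<Longrightarrow> \<exists>\<sigma>. matched \<sigma> \<tau>"
    unfolding lower_regular_eq upper_regular_eq by blast+
  show "matched \<sigma> \<tau> \<Longrightarrow> codim1_face K \<sigma> \<tau>" by (rule matched_codim1_face)
  show "matched \<sigma> \<tau> \<Longrightarrow> int (birth \<sigma>) = int (birth \<tau>)"
    using matched_birth by simp
  show "codim1_face K \<rho> \<nu> \<Longrightarrow> int (birth \<rho>) \<le> int (birth \<nu>)"
    using birth_mono by simp
  show "x \<in> K \<Longrightarrow> y \<in> K \<Longrightarrow> int (birth x) = int (birth y) \<Longrightarrow> x = y \<or> matched x y \<or> matched y x"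
    using same_birth by simp
qed (fact complex_eq_critical_regular critical_lower_regular_disjoint
       critical_upper_regular_disjoint lower_upper_regular_disjoint)+

lemma upper_regular_subset: "upper_regular W \<subseteq> K"
  and lower_regular_subset: "lower_regular W \<subseteq> K"
  using matched_birth unfolding upper_regular_eq lower_regular_eq by blast+

lemma ref_map_eq:
  "ref_map W K = reference K (codim1_face K) (\<lambda>x. int (card x)) (critical W) (upper_regular W)"
proof -
  have "is_ref_map W K f \<longleftrightarrow>
      is_reference K (codim1_face K) (\<lambda>x. int (card x)) (critical W) (upper_regular W) f" for f
  proof -
    have bd_iff: "(\<forall>\<tau>\<in>upper_regular W. f \<tau> = {} \<and> lin f (bd K \<tau>) = {}) \<longleftrightarrow>
        (\<forall>\<tau>\<in>upper_regular W. f \<tau> = {} \<and> lin f {\<rho>. codim1_face K \<rho> \<tau>} = {})"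
      using bd_eq_codim1_faces[OF subsetD[OF upper_regular_subset]] by (intro ball_cong) simp_all
    have crit_eq: "critical W \<inter> {\<nu>\<in>K. card \<nu> = card \<sigma>}
        = {\<nu>\<in>critical W. int (card \<nu>) = int (card \<sigma>)}"
      for \<sigma> using critical_subset by auto
    show ?thesis unfolding is_ref_map_def is_reference_def crit_eq bd_iff ..
  qed
  then have "is_ref_map W K =
      is_reference K (codim1_face K) (\<lambda>x. int (card x)) (critical W) (upper_regular W)" ..
  then show ?thesis unfolding ref_map_def reference_def by (rule arg_cong)
qed

lemma coref_map_eq:
  "coref_map W K =
    reference K (\<lambda>x y. codim1_face K y x) (\<lambda>x. - int (card x)) (critical W) (lower_regular W)"
proof -
  have "is_coref_map W K f \<longleftrightarrow>
      is_reference K (\<lambda>x y. codim1_face K y x) (\<lambda>x. - int (card x)) (critical W)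
        (lower_regular W) f" for f
  proof -
    have cobd_iff: "(\<forall>\<sigma>\<in>lower_regular W. f \<sigma> = {} \<and> lin f (cobd K \<sigma>) = {}) \<longleftrightarrow>
        (\<forall>\<sigma>\<in>lower_regular W. f \<sigma> = {} \<and> lin f {\<rho>. codim1_face K \<sigma> \<rho>} = {})"
      using cobd_eq_codim1_cofaces[OF subsetD[OF lower_regular_subset]]
      by (intro ball_cong) simp_all
    have crit_eq: "critical W \<inter> {\<nu>\<in>K. card \<nu> = card \<sigma>}
        = {\<nu>\<in>critical W. - int (card \<nu>) = - int (card \<sigma>)}"
      for \<sigma> using critical_subset by auto
    show ?thesis unfolding is_coref_map_def is_reference_def crit_eq cobd_iff ..
  qed
  then have "is_coref_map W K =
      is_reference K (\<lambda>x y. codim1_face K y x) (\<lambda>x. - int (card x)) (critical W)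
        (lower_regular W)" ..
  then show ?thesis unfolding coref_map_def reference_def by (rule arg_cong)
qed

lemma cycle_homologous:
  assumes "z \<in> cycles K p"
  shows "chain_add (lin (ext_map W K) (lin (ref_map W K) z)) z \<in> boundaries K p"
proof -
  interpret morse_matching K "codim1_face K" "\<lambda>x. int (card x)" "critical W" "lower_regular W"
      "upper_regular W" matched "\<lambda>x. int (birth x)"
    by (rule morse_matching)
  have boundary_eq: "lin (bd K) x = boundary x" if "x \<subseteq> K" for x
    by (rule lin_cong) (use that bd_eq_codim1_faces in blast)
  have z: "z \<subseteq> K" "\<forall>a\<in>z. int (card a) = int p + 1" "boundary z = {}"
    using assms boundary_eq by (auto simp: cycles_def simplices_def)
  obtain d where d: "d \<subseteq> {x\<in>K. int (card x) = int p + 1 + 1}"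
    and homologous: "chain_add (lin (\<lambda>\<kappa>. {\<nu>\<in>K. \<kappa> \<in> coreference \<nu>})
      (lin (reference K (codim1_face K) (\<lambda>x. int (card x)) (critical W) (upper_regular W)) z)) z
      = boundary d"
    using extension_reference_homologous[OF z] by blast
  have "ext_map W K = (\<lambda>\<kappa>. {\<nu>\<in>K. \<kappa> \<in> coreference \<nu>})"
    by (simp add: fun_eq_iff ext_map_def coref_map_eq)
  moreover have "d \<subseteq> simplices K (p + 1)" using d by (auto simp: simplices_def)
  moreover have "boundary d = lin (bd K) d" using boundary_eq d by blast
  ultimately show ?thesis
    using homologous unfolding boundaries_def ref_map_eq by auto
qed

lemma cocycle_cohomologous:
  assumes "z \<in> cocycles K p"
  shows "chain_add (lin (coext_map W K) (lin (coref_map W K) z)) z \<in> coboundaries K p"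
proof -
  interpret primal: morse_matching K "codim1_face K" "\<lambda>x. int (card x)" "critical W"
      "lower_regular W" "upper_regular W" matched "\<lambda>x. int (birth x)"
    by (rule morse_matching)
  interpret morse_matching K "\<lambda>x y. codim1_face K y x" "\<lambda>x. - int (card x)" "critical W"
      "upper_regular W" "lower_regular W" "\<lambda>x y. matched y x" "\<lambda>x. - int (birth x)"
    by (rule primal.dual)
  \<comment> \<open>Here \<open>boundary\<close> is the coboundary of \<open>K\<close> and \<open>coreference\<close> the reference map.\<close>
  have coboundary_eq: "lin (cobd K) x = boundary x" if "x \<subseteq> K" for x
    by (rule lin_cong) (use that cobd_eq_codim1_cofaces in blast)
  have z: "z \<subseteq> K" "\<forall>a\<in>z. - int (card a) = - (int p + 1)" "boundary z = {}"
    using assms coboundary_eq by (auto simp: cocycles_def simplices_def)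
  obtain d where d: "d \<subseteq> {x\<in>K. - int (card x) = - (int p + 1) + 1}"
    and cohomologous: "chain_add (lin (\<lambda>\<kappa>. {\<nu>\<in>K. \<kappa> \<in> coreference \<nu>})
      (lin (reference K (\<lambda>x y. codim1_face K y x) (\<lambda>x. - int (card x)) (critical W)
        (lower_regular W)) z)) z
      = boundary d"
    using extension_reference_homologous[OF z] by blast
  have "coext_map W K = (\<lambda>\<kappa>. {\<nu>\<in>K. \<kappa> \<in> coreference \<nu>})"
    by (simp add: fun_eq_iff coext_map_def ref_map_eq)
  moreover have "d \<subseteq> {\<sigma>\<in>K. card \<sigma> = p}" using d by auto
  moreover have "boundary d = lin (cobd K) d" using coboundary_eq d by blast
  ultimately show ?thesis
    using cohomologous unfolding coboundaries_def coref_map_eq by auto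
qed

end

theorem proposition18:
  fixes K :: "'v set set" and W :: "'v set set list" and p :: nat
  assumes "simplicial_complex K" and "morse_seq W K"
  shows "(\<forall>z\<in>cycles K p.
            chain_add (lin (ext_map W K) (lin (ref_map W K) z)) z \<in> boundaries K p) \<and>
         (\<forall>z\<in>cocycles K p.
            chain_add (lin (coext_map W K) (lin (coref_map W K) z)) z \<in> coboundaries K p)"
proof -
  interpret morse_sequence K W
    using assms by unfold_locales
  show ?thesis
    using cycle_homologous cocycle_cohomologous by blast
qed

end
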